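(* Let $G$ be a finite simple graph with an edge $e=\{x,y\}\in E(G)$ such that $\deg(x)\le 2$ and $\deg(y)\le 2$. Then $M_2(G)$ is contractible.
   Context: A $2$-matching of a graph $G$ is a set of edges $H\subseteq E(G)$ such that every vertex has degree at most $2$ in $H$. The $2$-matching complex $M_2(G)$ is the simplicial complex whose vertices are the edges of $G$ and whose faces are the $2$-matchings of $G$. *)

theory Defs
  imports "HOL-Analysis.Analysis"
begin

definition finite_simple_graph :: "'a set \<Rightarrow> 'a set set \<Rightarrow> bool" where
  "finite_simple_graph V E \<longleftrightarrow> finite V \<and> (\<forall>e\<in>E. e \<subseteq> V \<and> card e = 2)"

definition degree :: "'a set set \<Rightarrow> 'a \<Rightarrow> nat" where
  "degree E v = card {e \<in> E. v \<in> e}"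

definition two_matching :: "'a set set \<Rightarrow> 'a set set \<Rightarrow> bool" where
  "two_matching E H \<longleftrightarrow> H \<subseteq> E \<and> (\<forall>v. degree H v \<le> 2)"

definition two_matching_complex :: "'a set set \<Rightarrow> 'a set set set" where
  "two_matching_complex E = {H. two_matching E H}"

text \<open>Standard geometric realization of a simplicial complex K (a family of finite
  faces) in the space of real-valued functions on vertices, with the product topology:
  convex combinations of the vertices of a face, in barycentric coordinates.\<close>
definition geometric_realization :: "'v set set \<Rightarrow> ('v \<Rightarrow> real) set" where
  "geometric_realization K =
     {f. \<exists>\<sigma>\<in>K. (\<forall>v. f v \<ge> 0) \<and> (\<forall>v. v \<notin> \<sigma> \<longrightarrow> f v = 0) \<and> sum f \<sigma> = 1}"

definition realization_top :: "'v set set \<Rightarrow> ('v \<Rightarrow> real) topology" where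
  "realization_top K = subtopology (powertop_real UNIV) (geometric_realization K)"

end

theory Submission
  imports Defs
begin

text \<open>Both endpoints of \<open>e = {x, y}\<close> already have degree at most 2 in \<open>G\<close>, so \<open>e\<close> can be added
  to every 2-matching: \<open>M\<^sub>2(G)\<close> is a cone with apex \<open>e\<close>. The straight-line homotopy from the
  identity to the apex vertex stays inside the realization, because a point of the face \<open>\<sigma>\<close>
  moves within the face \<open>\<sigma> \<union> {e}\<close>.\<close>

lemma finite_simple_graph_finite_edges:
  assumes "finite_simple_graph V E"
  shows "finite E"
proof -
  have "E \<subseteq> Pow V"
    using assms by (auto simp: finite_simple_graph_def)
  then show ?thesis
    using assms finite_subset by (auto simp: finite_simple_graph_def)
qed

lemma two_matching_insert_edge:
  assumes "finite E" "two_matching E H" "e \<in> E" "\<And>v. v \<in> e \<Longrightarrow> degree E v \<le> 2"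
  shows "two_matching E (insert e H)"
proof -
  have H_sub: "H \<subseteq> E"
    using assms(2) by (simp add: two_matching_def)
  have "degree (insert e H) v \<le> 2" for v
  proof (cases "v \<in> e")
    case True
    have "degree (insert e H) v \<le> degree E v"
      unfolding degree_def using assms(1,3) H_sub by (intro card_mono) auto
    then show ?thesis
      using assms(4)[OF True] by linarith
  next
    case False
    then have "{f \<in> insert e H. v \<in> f} = {f \<in> H. v \<in> f}"
      by auto
    then show ?thesis
      using assms(2) by (simp add: degree_def two_matching_def)
  qed
  then show ?thesis
    using H_sub assms(3) by (simp add: two_matching_def)
qed

lemma continuous_map_linear_homotopy_powertop:
  fixes g :: "'a \<Rightarrow> real"
  shows "continuous_map (prod_topology euclideanreal (powertop_real UNIV)) (powertop_real UNIV)
     (\<lambda>(t, f) i. (1 - t) * f i + t * g i)"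
proof (subst continuous_map_componentwise_UNIV, intro allI)
  fix i :: 'a
  let ?X = "prod_topology euclideanreal (powertop_real UNIV)"
  have "continuous_map ?X euclideanreal (\<lambda>p. snd p i)"
    using continuous_map_compose[OF continuous_map_snd
        continuous_map_product_projection[of i UNIV "\<lambda>_. euclideanreal"]]
    by (simp add: o_def)
  then have "continuous_map ?X euclideanreal (\<lambda>p. (1 - fst p) * snd p i + fst p * g i)"
    by (intro continuous_map_add continuous_map_real_mult continuous_map_diff continuous_map_fst)
      auto
  then show "continuous_map ?X euclideanreal (\<lambda>p. (case p of (t, f) \<Rightarrow> \<lambda>i. (1 - t) * f i + t * g i) i)"
    by (simp add: case_prod_beta)
qed

lemma geometric_realization_linear_homotopy_to_apex:
  assumes cone: "\<And>\<sigma>. \<sigma> \<in> K \<Longrightarrow> insert a \<sigma> \<in> K"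
    and "f \<in> geometric_realization K" "t \<in> {0..1}"
  shows "(\<lambda>v. (1 - t) * f v + t * indicator {a} v) \<in> geometric_realization K"
proof -
  from assms(2) obtain \<sigma> where \<sigma>: "\<sigma> \<in> K" "\<forall>v. f v \<ge> 0" "\<forall>v. v \<notin> \<sigma> \<longrightarrow> f v = 0" "sum f \<sigma> = 1"
    by (auto simp: geometric_realization_def)
  have "finite \<sigma>"
    using \<sigma>(4) by (metis sum.infinite zero_neq_one)
  let ?\<tau> = "insert a \<sigma>"
  have "sum f ?\<tau> = 1"
    using \<sigma>(3,4) \<open>finite \<sigma>\<close> by (cases "a \<in> \<sigma>") (auto simp: insert_absorb)
  moreover have "sum (indicator {a}) ?\<tau> = (1::real)"
    using \<open>finite \<sigma>\<close> by (simp add: indicator_def sum.If_cases)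
  ultimately have "(\<Sum>v\<in>?\<tau>. (1 - t) * f v + t * indicator {a} v) = 1"
    by (simp add: sum.distrib flip: sum_distrib_left)
  moreover have "\<forall>v. (1 - t) * f v + t * indicator {a} v \<ge> 0"
    using assms(3) \<sigma>(2) by simp
  moreover have "\<forall>v. v \<notin> ?\<tau> \<longrightarrow> (1 - t) * f v + t * indicator {a} v = 0"
    using \<sigma>(3) by simp
  ultimately show ?thesis
    using cone[OF \<sigma>(1)] unfolding geometric_realization_def by blast
qed

lemma contractible_space_realization_cone:
  assumes cone: "\<And>\<sigma>. \<sigma> \<in> K \<Longrightarrow> insert a \<sigma> \<in> K"
  shows "contractible_space (realization_top K)"
proof -
  define S where "S = geometric_realization K"
  define h where "h = (\<lambda>(t, f) v. (1 - t) * f v + t * indicator {a} v :: real)"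
  have "continuous_map (subtopology (prod_topology euclideanreal (powertop_real UNIV)) ({0..1} \<times> S))
      (powertop_real UNIV) h"
    unfolding h_def by (rule continuous_map_from_subtopology[OF continuous_map_linear_homotopy_powertop])
  then have "continuous_map (prod_topology (top_of_set {0..1}) (realization_top K))
      (powertop_real UNIV) h"
    by (simp add: realization_top_def S_def subtopology_Times)
  moreover have "h \<in> {0..1} \<times> S \<rightarrow> S"
    using geometric_realization_linear_homotopy_to_apex[OF cone] by (auto simp: h_def S_def)
  ultimately have "continuous_map (prod_topology (top_of_set {0..1}) (realization_top K))
      (realization_top K) h"
    unfolding realization_top_def
    by (auto simp: continuous_map_in_subtopology S_def topspace_subtopology)
  moreover have "h (0, f) = f" "h (1, f) = indicator {a}" for f
    by (auto simp: h_def)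
  ultimately have "homotopic_with (\<lambda>_. True) (realization_top K) (realization_top K)
      id (\<lambda>_. indicator {a})"
    unfolding homotopic_with_def by (intro exI[of _ h]) auto
  then show ?thesis
    unfolding contractible_space_def by blast
qed

theorem mainTheorem6:
  fixes V :: "'a set" and E :: "'a set set" and x y :: 'a
  assumes "finite_simple_graph V E"
    and "{x, y} \<in> E"
    and "degree E x \<le> 2" and "degree E y \<le> 2"
  shows "contractible_space (realization_top (two_matching_complex E))"
proof (rule contractible_space_realization_cone)
  fix H
  assume "H \<in> two_matching_complex E"
  moreover have "degree E v \<le> 2" if "v \<in> {x, y}" for v
    using that assms(3,4) by auto
  ultimately show "insert {x, y} H \<in> two_matching_complex E"
    using two_matching_insert_edge[OF finite_simple_graph_finite_edges[OF assms(1)] _ assms(2)]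
    by (simp add: two_matching_complex_def)
qed

end
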